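(* Fix $k\in\mathbb N$ and $a_1,\dots,a_k>0$. Then, as $N\to\infty$, $$N^{2/k}\Big[\min_{j=1}^N\Big(\sum_{i=1}^k a_iw_{ij}^2\Big)-\min_{j=1}^N\Big(\sum_{i=1}^k a_iy_{ij}^2\Big)\Big]\to0\quad\text{in probability}.$$
   Context: Let $\mathbf{y}_1,\dots,\mathbf{y}_N$ be i.i.d. $\mathcal N(0,\mathrm{Id}_N)$ vectors in $\mathbb R^N$, $y_{ij}$ the $j$-th entry of $\mathbf y_i$. Gram–Schmidt: $\mathbf w_1=\mathbf y_1$, $\mathbf w_i=\mathbf y_i-\sum_{j<i}\frac{\langle\mathbf y_i,\mathbf w_j\rangle}{\|\mathbf w_j\|^2}\mathbf w_j$, with $w_{ij}$ the $j$-th entry of $\mathbf w_i$. *)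

theory Defs
  imports "HOL-Probability.Probability"
begin

text \<open>Vectors in R^N are modelled as functions nat => real, only the entries
  with index < N being relevant (entries 0..N-1 correspond to 1..N).\<close>

definition ipN :: "nat \<Rightarrow> (nat \<Rightarrow> real) \<Rightarrow> (nat \<Rightarrow> real) \<Rightarrow> real" where
  "ipN N u v = (\<Sum>j<N. u j * v j)"

fun gs_list :: "nat \<Rightarrow> (nat \<Rightarrow> nat \<Rightarrow> real) \<Rightarrow> nat \<Rightarrow> (nat \<Rightarrow> real) list" where
  "gs_list N y 0 = []"
| "gs_list N y (Suc n) =
     (let ws = gs_list N y n
      in ws @ [(\<lambda>c. y n c - (\<Sum>j<n. (ipN N (y n) (ws ! j) / ipN N (ws ! j) (ws ! j)) * (ws ! j) c))])"

definition gs :: "nat \<Rightarrow> (nat \<Rightarrow> nat \<Rightarrow> real) \<Rightarrow> nat \<Rightarrow> nat \<Rightarrow> real" where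
  "gs N y i = gs_list N y (Suc i) ! i"

definition gauss_space :: "nat \<Rightarrow> (nat \<times> nat \<Rightarrow> real) measure" where
  "gauss_space N = PiM ({..<N} \<times> {..<N}) (\<lambda>_. density lborel std_normal_density)"

definition gs_min_diff :: "nat \<Rightarrow> (nat \<Rightarrow> real) \<Rightarrow> nat \<Rightarrow> (nat \<times> nat \<Rightarrow> real) \<Rightarrow> real" where
  "gs_min_diff k a N \<omega> =
     (let y = (\<lambda>i j. \<omega> (i, j)) in
      real N powr (2 / real k) *
        (Min ((\<lambda>j. \<Sum>i<k. a i * (gs N y i j)\<^sup>2) ` {..<N})
         - Min ((\<lambda>j. \<Sum>i<k. a i * (y i j)\<^sup>2) ` {..<N})))"

end

theory Submission
  imports Defs
begin

text \<open>
  With probability tending to one the Gram matrix of the first \<open>k\<close> rows is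
  \<open>N (Id + O(\<eta>))\<close>, by Chebyshev's inequality applied to its entries.  For such rows the
  Gram--Schmidt recursion only adds to \<open>y\<^sub>i\<close> a combination of \<open>y\<^sub>0, ..., y\<^sub>i\<^sub>-\<^sub>1\<close> with
  coefficients \<open>O(\<eta>)\<close>, so in every column the form \<open>\<Sum> a\<^sub>i w\<^sub>i\<^sub>j\<^sup>2\<close> is within a factor
  \<open>1 \<plusminus> O(\<eta>)\<close> of \<open>\<Sum> a\<^sub>i y\<^sub>i\<^sub>j\<^sup>2\<close>, and so are the minima over the columns.  It remains
  to see that \<open>N\<^sup>2\<^sup>/\<^sup>k min\<^sub>j \<Sum> a\<^sub>i y\<^sub>i\<^sub>j\<^sup>2\<close> is tight: it exceeds \<open>(\<Sum> a\<^sub>i) \<sigma>\<^sup>2\<close> only if no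
  column lies in the cube \<open>[-s, s]\<^sup>k\<close> with \<open>s = \<sigma> N\<^sup>-\<^sup>1\<^sup>/\<^sup>k\<close>, which each column does with
  probability at least \<open>(c \<sigma>)\<^sup>k / N\<close>, \<open>c\<close> being twice the standard normal density at 1;
  a second-moment bound for the number of such columns makes this event have probability at most \<open>(c \<sigma>)\<^sup>-\<^sup>k\<close>.
\<close>

section \<open>Gram--Schmidt for nearly orthogonal rows\<close>

lemma gs_list_eq_map: "gs_list N y n = map (gs N y) [0..<n]"
proof (induction n)
  case (Suc n)
  have "gs N y n = gs_list N y (Suc n) ! n"
    by (simp add: gs_def)
  also have "\<dots> = last (gs_list N y (Suc n))"
    by (simp add: Let_def Suc nth_append)
  finally show ?case
    by (simp add: Let_def Suc)
qed simp

lemma gs_eq: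
  "gs N y i = (\<lambda>t. y i t - (\<Sum>j<i. ipN N (y i) (gs N y j) / ipN N (gs N y j) (gs N y j) * gs N y j t))"
proof -
  have "gs N y i = gs_list N y (Suc i) ! i"
    by (simp only: gs_def)
  also have "\<dots> = (\<lambda>t. y i t - (\<Sum>j<i. ipN N (y i) (gs N y j) / ipN N (gs N y j) (gs N y j) * gs N y j t))"
    by (simp only: gs_list.simps Let_def) (simp add: gs_list_eq_map nth_append)
  finally show ?thesis .
qed

lemma ipN_add_right: "ipN N u (\<lambda>t. v t + w t) = ipN N u v + ipN N u w"
  by (simp add: ipN_def distrib_left sum.distrib)

lemma ipN_sum_right: "ipN N u (\<lambda>t. \<Sum>l\<in>S. L l * z l t) = (\<Sum>l\<in>S. L l * ipN N u (z l))"
  by (simp add: ipN_def sum_distrib_left sum.swap[of _ S] algebra_simps)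

lemma ipN_add_self_ge: "ipN N u u + 2 * ipN N u v \<le> ipN N (\<lambda>t. u t + v t) (\<lambda>t. u t + v t)"
proof -
  have "0 \<le> ipN N v v"
    by (simp add: ipN_def sum_nonneg)
  then show ?thesis
    by (simp add: ipN_def algebra_simps sum.distrib sum_distrib_left)
qed

definition gram_close :: "nat \<Rightarrow> nat \<Rightarrow> real \<Rightarrow> (nat \<Rightarrow> nat \<Rightarrow> real) \<Rightarrow> bool" where
  "gram_close N k \<eta> y \<longleftrightarrow>
     (\<forall>l<k. \<forall>m<k. \<bar>ipN N (y l) (y m) - (if l = m then real N else 0)\<bar> \<le> \<eta> * real N)"

lemma gram_closeD:
  "gram_close N k \<eta> y \<Longrightarrow> l < k \<Longrightarrow> m < k \<Longrightarrow>
     \<bar>ipN N (y l) (y m) - (if l = m then real N else 0)\<bar> \<le> \<eta> * real N"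
  by (simp add: gram_close_def)

definition perturbed_row :: "nat \<Rightarrow> real \<Rightarrow> (nat \<Rightarrow> nat \<Rightarrow> real) \<Rightarrow> nat \<Rightarrow> (nat \<Rightarrow> real) \<Rightarrow> bool" where
  "perturbed_row k \<epsilon> y i w \<longleftrightarrow>
     (\<exists>L. (\<forall>l. i \<le> l \<longrightarrow> L l = 0) \<and> (\<forall>l. \<bar>L l\<bar> \<le> \<epsilon>) \<and> w = (\<lambda>t. y i t + (\<Sum>l<k. L l * y l t)))"

lemma gram_close_comb_le:
  assumes G: "gram_close N k \<eta> y" and \<eta>: "0 \<le> \<eta>"
    and L0: "\<And>l. j \<le> l \<Longrightarrow> L l = 0" and L1: "\<And>l. \<bar>L l\<bar> \<le> 1" and t: "j \<le> t" "t < k"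
  shows "\<bar>\<Sum>l<k. L l * ipN N (y t) (y l)\<bar> \<le> real k * (\<eta> * real N)"
proof -
  have "\<bar>L l * ipN N (y t) (y l)\<bar> \<le> \<eta> * real N" if "l < k" for l
  proof (cases "j \<le> l")
    case True
    then show ?thesis using L0 \<eta> by simp
  next
    case False
    then have "\<bar>ipN N (y t) (y l)\<bar> \<le> \<eta> * real N"
      using gram_closeD[OF G t(2) that] False t by auto
    then have "\<bar>L l\<bar> * \<bar>ipN N (y t) (y l)\<bar> \<le> 1 * (\<eta> * real N)"
      by (rule mult_mono[OF L1[of l]]) simp_all
    then show ?thesis
      by (simp add: abs_mult)
  qed
  then have "(\<Sum>l<k. \<bar>L l * ipN N (y t) (y l)\<bar>) \<le> (\<Sum>l<k. \<eta> * real N)"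
    by (intro sum_mono) simp
  then have "(\<Sum>l<k. \<bar>L l * ipN N (y t) (y l)\<bar>) \<le> real k * (\<eta> * real N)"
    by simp
  then show ?thesis
    by (rule order_trans[OF sum_abs])
qed

lemma perturbed_row_inner_le:
  assumes G: "gram_close N k \<eta> y" and \<eta>: "0 \<le> \<eta>" and w: "perturbed_row k 1 y j w"
    and ji: "j < i" and i: "i < k"
  shows "\<bar>ipN N (y i) w\<bar> \<le> (real k + 1) * \<eta> * real N"
proof -
  obtain L where L0: "\<And>l. j \<le> l \<Longrightarrow> L l = 0" and L1: "\<And>l. \<bar>L l\<bar> \<le> 1"
    and w_eq: "w = (\<lambda>t. y j t + (\<Sum>l<k. L l * y l t))"
    using w by (auto simp: perturbed_row_def)
  have "ipN N (y i) w = ipN N (y i) (y j) + (\<Sum>l<k. L l * ipN N (y i) (y l))"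
    by (simp add: w_eq ipN_add_right ipN_sum_right)
  moreover have "\<bar>ipN N (y i) (y j)\<bar> \<le> \<eta> * real N"
    using gram_closeD[OF G i, of j] ji i by auto
  moreover have "\<bar>\<Sum>l<k. L l * ipN N (y i) (y l)\<bar> \<le> real k * (\<eta> * real N)"
    using G \<eta> L0 L1 ji i by (intro gram_close_comb_le) auto
  moreover have "(real k + 1) * \<eta> * real N = \<eta> * real N + real k * (\<eta> * real N)"
    by (simp add: algebra_simps)
  ultimately show ?thesis
    using abs_triangle_ineq[of "ipN N (y i) (y j)" "\<Sum>l<k. L l * ipN N (y i) (y l)"] by linarith
qed

lemma perturbed_row_norm_ge:
  assumes G: "gram_close N k \<eta> y" and \<eta>: "0 \<le> \<eta>" and w: "perturbed_row k 1 y j w" and j: "j < k"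
  shows "(1 - (2 * real k + 1) * \<eta>) * real N \<le> ipN N w w"
proof -
  obtain L where L0: "\<And>l. j \<le> l \<Longrightarrow> L l = 0" and L1: "\<And>l. \<bar>L l\<bar> \<le> 1"
    and w_eq: "w = (\<lambda>t. y j t + (\<Sum>l<k. L l * y l t))"
    using w by (auto simp: perturbed_row_def)
  have "ipN N (y j) (y j) + 2 * (\<Sum>l<k. L l * ipN N (y j) (y l)) \<le> ipN N w w"
    using ipN_add_self_ge[of N "y j" "\<lambda>t. \<Sum>l<k. L l * y l t"] by (simp add: w_eq ipN_sum_right)
  moreover have "real N - \<eta> * real N \<le> ipN N (y j) (y j)"
    using gram_closeD[OF G j j] by (simp add: abs_le_iff)
  moreover have "\<bar>\<Sum>l<k. L l * ipN N (y j) (y l)\<bar> \<le> real k * (\<eta> * real N)"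
    using G \<eta> L0 L1 j by (intro gram_close_comb_le) auto
  moreover have "(1 - (2 * real k + 1) * \<eta>) * real N = real N - \<eta> * real N - 2 * (real k * (\<eta> * real N))"
    by (simp add: algebra_simps)
  ultimately show ?thesis
    by (simp add: abs_le_iff)
qed

lemma diff_sum_row_combs_eq:
  fixes y :: "nat \<Rightarrow> nat \<Rightarrow> real"
  assumes w: "\<And>j. j < i \<Longrightarrow> w j = (\<lambda>t. y j t + (\<Sum>l<k. L j l * y l t))" and i: "i \<le> k"
  shows "(\<lambda>t. y i t - (\<Sum>j<i. r j * w j t)) =
    (\<lambda>t. y i t + (\<Sum>l<k. (- (if l < i then r l else 0) - (\<Sum>j<i. r j * L j l)) * y l t))"
proof
  fix t
  have "(\<Sum>j<i. r j * w j t) = (\<Sum>j<i. r j * y j t) + (\<Sum>j<i. r j * (\<Sum>l<k. L j l * y l t))"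
    by (simp add: w distrib_left sum.distrib)
  also have "(\<Sum>j<i. r j * y j t) = (\<Sum>l<k. (if l < i then r l else 0) * y l t)"
  proof -
    have "{..<k} \<inter> {l. l < i} = {..<i}"
      using i by auto
    then show ?thesis
      by (simp add: if_distrib[of "\<lambda>x. x * _"] sum.If_cases cong: if_cong)
  qed
  also have "(\<Sum>j<i. r j * (\<Sum>l<k. L j l * y l t)) = (\<Sum>l<k. (\<Sum>j<i. r j * L j l) * y l t)"
    by (simp add: sum_distrib_left sum_distrib_right sum.swap[of _ "{..<i}"] mult.assoc)
  finally show "y i t - (\<Sum>j<i. r j * w j t) =
      y i t + (\<Sum>l<k. (- (if l < i then r l else 0) - (\<Sum>j<i. r j * L j l)) * y l t)"
    by (simp add: left_diff_distrib sum_subtractf sum_negf)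
qed

lemma perturbed_row_mono:
  "perturbed_row k \<epsilon> y i w \<Longrightarrow> \<epsilon> \<le> \<epsilon>' \<Longrightarrow> perturbed_row k \<epsilon>' y i w"
  unfolding perturbed_row_def by (blast intro: order_trans)

lemma perturbed_row_gs_coeff_le:
  assumes G: "gram_close N k \<eta> y" and N: "0 < N" and \<eta>: "0 \<le> \<eta>" "2 * (real k + 1)\<^sup>2 * \<eta> \<le> 1"
    and w: "perturbed_row k 1 y j w" and ji: "j < i" and i: "i < k"
  shows "\<bar>ipN N (y i) w / ipN N w w\<bar> \<le> 2 * (real k + 1) * \<eta>"
proof -
  have "(2 * real k + 1) * \<eta> \<le> (real k + 1)\<^sup>2 * \<eta>"
    using \<eta> by (intro mult_right_mono) (auto simp: power2_eq_square algebra_simps)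
  then have "1 / 2 \<le> 1 - (2 * real k + 1) * \<eta>"
    using \<eta>(2) by linarith
  then have "real N / 2 \<le> (1 - (2 * real k + 1) * \<eta>) * real N"
    using mult_right_mono[of "1 / 2" _ "real N"] by simp
  also have "\<dots> \<le> ipN N w w"
    using perturbed_row_norm_ge[OF G \<eta>(1) w] ji i by simp
  finally have "real N / 2 \<le> ipN N w w" .
  moreover have "\<bar>ipN N (y i) w\<bar> \<le> (real k + 1) * \<eta> * real N"
    using perturbed_row_inner_le[OF G \<eta>(1) w ji i] .
  ultimately have "\<bar>ipN N (y i) w / ipN N w w\<bar> \<le> (real k + 1) * \<eta> * real N / (real N / 2)"
    using N unfolding abs_divide by (intro frac_le) auto
  also have "(real k + 1) * \<eta> * real N / (real N / 2) = 2 * (real k + 1) * \<eta>"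
    using N by (simp add: field_simps)
  finally show ?thesis .
qed

lemma gs_perturbed_row:
  assumes G: "gram_close N k \<eta> y" and N: "0 < N" and \<eta>: "0 \<le> \<eta>" "2 * (real k + 1)\<^sup>2 * \<eta> \<le> 1"
    and i: "i < k"
  shows "perturbed_row k (2 * (real k + 1)\<^sup>2 * \<eta>) y i (gs N y i)"
  using i
proof (induction i rule: less_induct)
  case (less i)
  define \<epsilon> where "\<epsilon> = 2 * (real k + 1)\<^sup>2 * \<eta>"
  have row: "perturbed_row k \<epsilon> y j (gs N y j)" if "j < i" for j
    using less that by (simp add: \<epsilon>_def)
  then have "\<forall>j. \<exists>L. j < i \<longrightarrow>
      (\<forall>l. j \<le> l \<longrightarrow> L l = 0) \<and> (\<forall>l. \<bar>L l\<bar> \<le> \<epsilon>) \<and> gs N y j = (\<lambda>t. y j t + (\<Sum>l<k. L l * y l t))"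
    by (auto simp: perturbed_row_def)
  then obtain L where L0: "\<And>j l. j < i \<Longrightarrow> j \<le> l \<Longrightarrow> L j l = 0"
    and L_le: "\<And>j l. j < i \<Longrightarrow> \<bar>L j l\<bar> \<le> \<epsilon>"
    and gs_L: "\<And>j. j < i \<Longrightarrow> gs N y j = (\<lambda>t. y j t + (\<Sum>l<k. L j l * y l t))"
    by metis
  define r where "r j = ipN N (y i) (gs N y j) / ipN N (gs N y j) (gs N y j)" for j
  have r_le: "\<bar>r j\<bar> \<le> 2 * (real k + 1) * \<eta>" if "j < i" for j
  proof -
    have "perturbed_row k 1 y j (gs N y j)"
      using perturbed_row_mono[OF row[OF that]] \<eta>(2) by (simp add: \<epsilon>_def)
    then show ?thesis
      unfolding r_def using perturbed_row_gs_coeff_le[OF G N \<eta>] that less.prems by blast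
  qed
  define L' where "L' l = - (if l < i then r l else 0) - (\<Sum>j<i. r j * L j l)" for l
  have "gs N y i = (\<lambda>t. y i t - (\<Sum>j<i. r j * gs N y j t))"
    by (subst gs_eq) (simp add: r_def)
  also have "\<dots> = (\<lambda>t. y i t + (\<Sum>l<k. L' l * y l t))"
    unfolding L'_def using gs_L less.prems by (intro diff_sum_row_combs_eq) auto
  finally have "gs N y i = (\<lambda>t. y i t + (\<Sum>l<k. L' l * y l t))" .
  moreover have "L' l = 0" if "i \<le> l" for l
    using that L0 by (simp add: L'_def)
  moreover have "\<bar>L' l\<bar> \<le> \<epsilon>" for l
  proof -
    have "\<bar>r j * L j l\<bar> \<le> 2 * (real k + 1) * \<eta> * 1" if "j < i" for j
      using r_le[OF that] L_le[OF that, of l] \<eta> unfolding abs_mult \<epsilon>_def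
      by (intro mult_mono) auto
    then have "(\<Sum>j<i. \<bar>r j * L j l\<bar>) \<le> real i * (2 * (real k + 1) * \<eta>)"
      using sum_mono[of "{..<i}" "\<lambda>j. \<bar>r j * L j l\<bar>" "\<lambda>_. 2 * (real k + 1) * \<eta>"] by simp
    then have "\<bar>\<Sum>j<i. r j * L j l\<bar> \<le> real i * (2 * (real k + 1) * \<eta>)"
      by (rule order_trans[OF sum_abs])
    also have "\<dots> \<le> real k * (2 * (real k + 1) * \<eta>)"
      using less.prems \<eta> by (intro mult_right_mono) auto
    finally have "\<bar>\<Sum>j<i. r j * L j l\<bar> \<le> real k * (2 * (real k + 1) * \<eta>)" .
    moreover have "\<bar>if l < i then r l else 0\<bar> \<le> 2 * (real k + 1) * \<eta>"
      using r_le \<eta> by auto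
    ultimately have "\<bar>L' l\<bar> \<le> 2 * (real k + 1) * \<eta> + real k * (2 * (real k + 1) * \<eta>)"
      unfolding L'_def by linarith
    then show ?thesis
      by (simp add: \<epsilon>_def power2_eq_square algebra_simps)
  qed
  ultimately show ?case
    unfolding perturbed_row_def \<epsilon>_def by blast
qed

lemma square_add_comb_diff_le:
  fixes Y L :: "nat \<Rightarrow> real"
  assumes L: "\<And>l. \<bar>L l\<bar> \<le> \<epsilon>" and \<epsilon>: "0 \<le> \<epsilon>" "\<epsilon> \<le> 1" and i: "i < k"
  shows "\<bar>(Y i + (\<Sum>l<k. L l * Y l))\<^sup>2 - (Y i)\<^sup>2\<bar> \<le> (2 * real k + 1) * \<epsilon> * (\<Sum>l<k. (Y l)\<^sup>2)"
proof -
  define e S where "e = (\<Sum>l<k. L l * Y l)" and "S = (\<Sum>l<k. (Y l)\<^sup>2)"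
  have S: "0 \<le> S"
    by (simp add: S_def sum_nonneg)
  have "(\<Sum>l<k. (L l)\<^sup>2) \<le> (\<Sum>l<k. \<epsilon>\<^sup>2)"
    using L \<epsilon> by (intro sum_mono) (simp add: abs_le_square_iff[symmetric])
  then have "(\<Sum>l<k. (L l)\<^sup>2) * S \<le> real k * \<epsilon>\<^sup>2 * S"
    using S by (intro mult_right_mono) simp_all
  then have e2: "e\<^sup>2 \<le> real k * \<epsilon>\<^sup>2 * S"
    using Cauchy_Schwarz_ineq_sum[of L Y "{..<k}"] by (simp add: e_def S_def)
  have Yi: "(Y i)\<^sup>2 \<le> S"
    unfolding S_def using i by (intro member_le_sum) auto
  show ?thesis
  proof (cases "\<epsilon> = 0")
    case True
    then show ?thesis
      using e2 by (simp add: e_def)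
  next
    case False
    then have \<epsilon>0: "0 < \<epsilon>" using \<epsilon> by simp
    have "\<epsilon> * (2 * \<bar>Y i * e\<bar>) \<le> \<epsilon>\<^sup>2 * (Y i)\<^sup>2 + e\<^sup>2"
      using sum_squares_bound[of "\<epsilon> * \<bar>Y i\<bar>" "\<bar>e\<bar>"] \<epsilon>
      by (simp add: abs_mult power_mult_distrib algebra_simps)
    also have "\<dots> \<le> \<epsilon>\<^sup>2 * S + real k * \<epsilon>\<^sup>2 * S"
      using mult_left_mono[OF Yi, of "\<epsilon>\<^sup>2"] e2 by simp
    also have "\<dots> = \<epsilon> * (\<epsilon> * S + real k * \<epsilon> * S)"
      by (simp add: power2_eq_square algebra_simps)
    finally have cross: "2 * \<bar>Y i * e\<bar> \<le> \<epsilon> * S + real k * \<epsilon> * S"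
      using \<epsilon>0 by simp
    have "\<epsilon>\<^sup>2 \<le> \<epsilon>"
      using \<epsilon> by (simp add: power2_eq_square mult_left_le_one_le)
    then have "real k * \<epsilon>\<^sup>2 * S \<le> real k * \<epsilon> * S"
      using S by (simp add: mult_left_mono mult_right_mono)
    moreover have "\<bar>2 * (Y i * e)\<bar> = 2 * \<bar>Y i * e\<bar>" "\<bar>e\<^sup>2\<bar> = e\<^sup>2"
      by (simp_all add: abs_mult)
    ultimately have "\<bar>2 * (Y i * e) + e\<^sup>2\<bar> \<le> \<epsilon> * S + real k * \<epsilon> * S + real k * \<epsilon> * S"
      using cross e2 abs_triangle_ineq[of "2 * (Y i * e)" "e\<^sup>2"] by linarith
    moreover have "(Y i + e)\<^sup>2 - (Y i)\<^sup>2 = 2 * (Y i * e) + e\<^sup>2"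
      by (simp add: power2_eq_square algebra_simps)
    moreover have "\<epsilon> * S + real k * \<epsilon> * S + real k * \<epsilon> * S = (2 * real k + 1) * \<epsilon> * S"
      by (simp add: algebra_simps)
    ultimately show ?thesis
      by (simp add: e_def S_def)
  qed
qed

lemma weighted_square_add_comb_diff_le:
  fixes Y :: "nat \<Rightarrow> real" and L :: "nat \<Rightarrow> nat \<Rightarrow> real"
  assumes a: "\<And>i. i < k \<Longrightarrow> 0 < a i" and L: "\<And>i l. i < k \<Longrightarrow> \<bar>L i l\<bar> \<le> \<epsilon>"
    and \<epsilon>: "0 \<le> \<epsilon>" "\<epsilon> \<le> 1"
  shows "\<bar>(\<Sum>i<k. a i * (Y i + (\<Sum>l<k. L i l * Y l))\<^sup>2) - (\<Sum>i<k. a i * (Y i)\<^sup>2)\<bar>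
           \<le> (2 * real k + 1) * \<epsilon> * (\<Sum>i<k. a i) / Min (a ` {..<k}) * (\<Sum>i<k. a i * (Y i)\<^sup>2)"
proof (cases "k = 0")
  case False
  define S where "S = (\<Sum>l<k. (Y l)\<^sup>2)"
  define amin where "amin = Min (a ` {..<k})"
  have "a ` {..<k} \<noteq> {}"
    using False by (auto simp: lessThan_empty_iff)
  then have amin: "0 < amin" "\<And>i. i < k \<Longrightarrow> amin \<le> a i"
    using a by (simp_all add: amin_def Min_gr_iff)
  have "\<bar>\<Sum>i<k. a i * ((Y i + (\<Sum>l<k. L i l * Y l))\<^sup>2 - (Y i)\<^sup>2)\<bar>
      \<le> (\<Sum>i<k. a i * ((2 * real k + 1) * \<epsilon> * S))"
  proof (rule order_trans[OF sum_abs], intro sum_mono)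
    fix i assume "i \<in> {..<k}"
    then have "a i * \<bar>(Y i + (\<Sum>l<k. L i l * Y l))\<^sup>2 - (Y i)\<^sup>2\<bar> \<le> a i * ((2 * real k + 1) * \<epsilon> * S)"
      unfolding S_def using a[of i] L \<epsilon> by (intro mult_left_mono square_add_comb_diff_le) auto
    then show "\<bar>a i * ((Y i + (\<Sum>l<k. L i l * Y l))\<^sup>2 - (Y i)\<^sup>2)\<bar> \<le> a i * ((2 * real k + 1) * \<epsilon> * S)"
      using a[of i] \<open>i \<in> {..<k}\<close> by (simp add: abs_mult)
  qed
  also have "\<dots> = (\<Sum>i<k. a i) * ((2 * real k + 1) * \<epsilon> * S)"
    by (rule sum_distrib_right[symmetric])
  also have "\<dots> = (2 * real k + 1) * \<epsilon> * (\<Sum>i<k. a i) / amin * (amin * S)"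
    using amin by simp
  also have "amin * S \<le> (\<Sum>i<k. a i * (Y i)\<^sup>2)"
    unfolding S_def sum_distrib_left using amin by (intro sum_mono mult_right_mono) auto
  then have "(2 * real k + 1) * \<epsilon> * (\<Sum>i<k. a i) / amin * (amin * S)
      \<le> (2 * real k + 1) * \<epsilon> * (\<Sum>i<k. a i) / amin * (\<Sum>i<k. a i * (Y i)\<^sup>2)"
    using a amin \<epsilon> by (intro mult_left_mono divide_nonneg_pos mult_nonneg_nonneg sum_nonneg) (auto intro: less_imp_le)
  finally show ?thesis
    by (simp add: amin_def algebra_simps sum_subtractf)
qed simp

section \<open>Minima of perturbed quadratic forms\<close>

lemma abs_Min_image_diff_le:
  fixes f g :: "'a \<Rightarrow> real"
  assumes D: "finite D" "D \<noteq> {}" and nonneg: "\<And>x. x \<in> D \<Longrightarrow> 0 \<le> f x" "\<And>x. x \<in> D \<Longrightarrow> 0 \<le> g x"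
    and \<rho>: "0 \<le> \<rho>" and close: "\<And>x. x \<in> D \<Longrightarrow> \<bar>f x - g x\<bar> \<le> \<rho> * g x"
  shows "\<bar>Min (f ` D) - Min (g ` D)\<bar> \<le> \<rho> * Min (g ` D)"
proof -
  have "Min (g ` D) \<in> g ` D"
    using D by simp
  then obtain x where x: "x \<in> D" "g x = Min (g ` D)"
    by (metis imageE)
  have "Min (f ` D) \<le> f x"
    using D x by simp
  also have "\<dots> \<le> (1 + \<rho>) * Min (g ` D)"
    using close[OF x(1)] x by (simp add: algebra_simps abs_le_iff)
  finally have upper: "Min (f ` D) \<le> (1 + \<rho>) * Min (g ` D)" .
  have "(1 - \<rho>) * Min (g ` D) \<le> f z" if z: "z \<in> D" for z
  proof (cases "\<rho> \<le> 1")
    case True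
    then have "(1 - \<rho>) * Min (g ` D) \<le> (1 - \<rho>) * g z"
      using D z by (intro mult_left_mono) auto
    then show ?thesis
      using close[OF z] by (simp add: algebra_simps abs_le_iff)
  next
    case False
    then have "(1 - \<rho>) * Min (g ` D) \<le> 0"
      using D nonneg(2) by (intro mult_nonpos_nonneg) auto
    then show ?thesis
      using nonneg(1)[OF z] by linarith
  qed
  then have "(1 - \<rho>) * Min (g ` D) \<le> Min (f ` D)"
    using D by simp
  with upper show ?thesis
    by (simp add: abs_le_iff algebra_simps)
qed

definition min_form :: "nat \<Rightarrow> (nat \<Rightarrow> real) \<Rightarrow> nat \<Rightarrow> (nat \<Rightarrow> nat \<Rightarrow> real) \<Rightarrow> real" where
  "min_form k a N y = Min ((\<lambda>j. \<Sum>i<k. a i * (y i j)\<^sup>2) ` {..<N})"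

lemma gs_min_diff_eq:
  "gs_min_diff k a N \<omega> =
     real N powr (2 / real k) * (min_form k a N (gs N (curry \<omega>)) - min_form k a N (curry \<omega>))"
  by (simp add: gs_min_diff_def min_form_def curry_def)

lemma min_form_le_small_column:
  assumes a: "\<And>i. i < k \<Longrightarrow> 0 \<le> a i" and j: "j < N" and small: "\<And>i. i < k \<Longrightarrow> \<bar>y i j\<bar> \<le> s"
  shows "min_form k a N y \<le> (\<Sum>i<k. a i) * s\<^sup>2"
proof -
  have "min_form k a N y \<le> (\<Sum>i<k. a i * (y i j)\<^sup>2)"
    unfolding min_form_def using j by (intro Min_le) auto
  also have "\<dots> \<le> (\<Sum>i<k. a i * s\<^sup>2)"
  proof (intro sum_mono mult_left_mono)
    fix i assume "i \<in> {..<k}"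
    then have "\<bar>y i j\<bar>\<^sup>2 \<le> s\<^sup>2"
      using small by (intro power_mono) auto
    then show "(y i j)\<^sup>2 \<le> s\<^sup>2"
      by simp
  qed (use a in auto)
  finally show ?thesis
    by (simp add: sum_distrib_right)
qed

text \<open>\<open>2 (k + 1)\<^sup>2 \<eta>\<close> bounds the Gram--Schmidt coefficients, see \<open>gs_perturbed_row\<close>.\<close>
definition gs_rel_error :: "nat \<Rightarrow> (nat \<Rightarrow> real) \<Rightarrow> real \<Rightarrow> real" where
  "gs_rel_error k a \<eta> = (2 * real k + 1) * (2 * (real k + 1)\<^sup>2 * \<eta>) * (\<Sum>i<k. a i) / Min (a ` {..<k})"

lemma gs_rel_error_nonneg:
  assumes a: "\<And>i. i < k \<Longrightarrow> 0 < a i" and \<eta>: "0 \<le> \<eta>"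
  shows "0 \<le> gs_rel_error k a \<eta>"
proof (cases "k = 0")
  case False
  then have "0 < Min (a ` {..<k})"
    using a by (auto simp: Min_gr_iff lessThan_empty_iff)
  moreover have "0 \<le> (\<Sum>i<k. a i)"
    using a by (intro sum_nonneg) (auto intro: less_imp_le)
  ultimately show ?thesis
    using \<eta> by (simp add: gs_rel_error_def)
qed (simp add: gs_rel_error_def)

lemma exists_gs_rel_error_le:
  assumes a: "\<And>i. i < k \<Longrightarrow> 0 < a i" and T: "0 \<le> T" and e: "0 < e"
  shows "\<exists>\<eta>>0. 2 * (real k + 1)\<^sup>2 * \<eta> \<le> 1 \<and> gs_rel_error k a \<eta> * T \<le> e"
proof -
  define R where "R = gs_rel_error k a 1 * T"
  have R: "0 \<le> R"
    unfolding R_def using gs_rel_error_nonneg[of k a 1] a T by simp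
  define \<eta> where "\<eta> = min (1 / (2 * (real k + 1)\<^sup>2)) (e / (R + 1))"
  have \<eta>: "0 < \<eta>" "2 * (real k + 1)\<^sup>2 * \<eta> \<le> 1"
    using e R by (auto simp: \<eta>_def field_simps min_def)
  have "gs_rel_error k a \<eta> * T = \<eta> * R"
    by (simp add: gs_rel_error_def R_def)
  also have "\<dots> \<le> e / (R + 1) * R"
    using R by (intro mult_right_mono) (auto simp: \<eta>_def)
  also have "\<dots> \<le> e"
    using e R by (simp add: field_simps)
  finally show ?thesis
    using \<eta> by blast
qed

lemma gs_min_form_diff_le:
  assumes G: "gram_close N k \<eta> y" and N: "0 < N" and \<eta>: "0 \<le> \<eta>" "2 * (real k + 1)\<^sup>2 * \<eta> \<le> 1"
    and a: "\<And>i. i < k \<Longrightarrow> 0 < a i"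
  shows "\<bar>min_form k a N (gs N y) - min_form k a N y\<bar> \<le> gs_rel_error k a \<eta> * min_form k a N y"
proof -
  define \<epsilon> where "\<epsilon> = 2 * (real k + 1)\<^sup>2 * \<eta>"
  have "\<forall>i. \<exists>L. i < k \<longrightarrow> (\<forall>l. \<bar>L l\<bar> \<le> \<epsilon>) \<and> gs N y i = (\<lambda>t. y i t + (\<Sum>l<k. L l * y l t))"
    using gs_perturbed_row[OF G N \<eta>] unfolding perturbed_row_def \<epsilon>_def by blast
  then obtain L where L: "\<And>i l. i < k \<Longrightarrow> \<bar>L i l\<bar> \<le> \<epsilon>"
    and gs_L: "\<And>i. i < k \<Longrightarrow> gs N y i = (\<lambda>t. y i t + (\<Sum>l<k. L i l * y l t))"
    by metis
  have "\<bar>(\<Sum>i<k. a i * (gs N y i t)\<^sup>2) - (\<Sum>i<k. a i * (y i t)\<^sup>2)\<bar>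
      \<le> gs_rel_error k a \<eta> * (\<Sum>i<k. a i * (y i t)\<^sup>2)" for t
  proof -
    have "(\<Sum>i<k. a i * (gs N y i t)\<^sup>2) = (\<Sum>i<k. a i * (y i t + (\<Sum>l<k. L i l * y l t))\<^sup>2)"
      by (intro sum.cong) (simp_all add: gs_L)
    then show ?thesis
      using weighted_square_add_comb_diff_le[OF a L, where Y = "\<lambda>l. y l t"] \<eta>
      by (simp add: gs_rel_error_def \<epsilon>_def)
  qed
  moreover have "0 \<le> (\<Sum>i<k. a i * (z i t)\<^sup>2)" for z :: "nat \<Rightarrow> nat \<Rightarrow> real" and t
    using a by (intro sum_nonneg mult_nonneg_nonneg) (auto intro: less_imp_le)
  ultimately show ?thesis
    unfolding min_form_def using N gs_rel_error_nonneg[OF a \<eta>(1)]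
    by (intro abs_Min_image_diff_le) auto
qed

section \<open>Second moments of products over disjoint blocks\<close>

context prob_space
begin

lemma integral_prod_coordinates:
  fixes f :: "'a \<Rightarrow> real"
  assumes I: "finite I" and B: "B \<subseteq> I" and f: "integrable M f"
  shows "integrable (PiM I (\<lambda>_. M)) (\<lambda>\<omega>. \<Prod>p\<in>B. f (\<omega> p))"
    and "(\<integral>\<omega>. (\<Prod>p\<in>B. f (\<omega> p)) \<partial>PiM I (\<lambda>_. M)) = expectation f ^ card B"
proof -
  interpret Prod: product_prob_space "\<lambda>_::'b. M" UNIV
    by unfold_locales
  define g where "g = (\<lambda>p x. if p \<in> B then f x else 1)"
  have g: "integrable M (g p)" for p
    using f by (cases "p \<in> B") (simp_all add: g_def)
  have "(\<Prod>p\<in>B. f (\<omega> p)) = (\<Prod>p\<in>I. g p (\<omega> p))" for \<omega>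
    using I B by (simp add: g_def prod.inter_restrict[symmetric] Int_absorb1)
  then have eq: "(\<lambda>\<omega>. \<Prod>p\<in>B. f (\<omega> p)) = (\<lambda>\<omega>. \<Prod>p\<in>I. g p (\<omega> p))"
    by (rule ext)
  show "integrable (PiM I (\<lambda>_. M)) (\<lambda>\<omega>. \<Prod>p\<in>B. f (\<omega> p))"
    unfolding eq using I g by (rule Prod.product_integrable_prod)
  have "(\<integral>\<omega>. (\<Prod>p\<in>I. g p (\<omega> p)) \<partial>PiM I (\<lambda>_. M)) = (\<Prod>p\<in>I. expectation (g p))"
    using I g by (rule Prod.product_integral_prod)
  also have "\<dots> = (\<Prod>p\<in>I. if p \<in> B then expectation f else 1)"
    by (intro prod.cong) (simp_all add: g_def prob_space)
  also have "\<dots> = expectation f ^ card B"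
    using I B by (simp add: prod.inter_restrict[symmetric] Int_absorb1)
  finally show "(\<integral>\<omega>. (\<Prod>p\<in>B. f (\<omega> p)) \<partial>PiM I (\<lambda>_. M)) = expectation f ^ card B"
    unfolding eq .
qed

lemma prob_sum_uncorrelated_deviation:
  fixes Y :: "'c \<Rightarrow> 'a \<Rightarrow> real" and \<mu> s :: real
  assumes C: "finite C" and Y: "\<And>c. c \<in> C \<Longrightarrow> integrable M (Y c)" "\<And>c. c \<in> C \<Longrightarrow> expectation (Y c) = \<mu>"
    and YY: "\<And>c c'. c \<in> C \<Longrightarrow> c' \<in> C \<Longrightarrow> integrable M (\<lambda>x. Y c x * Y c' x)"
      "\<And>c c'. c \<in> C \<Longrightarrow> c' \<in> C \<Longrightarrow> expectation (\<lambda>x. Y c x * Y c' x) = (if c = c' then s else \<mu>\<^sup>2)"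
    and b: "0 < b"
  shows "prob {x \<in> space M. b \<le> \<bar>(\<Sum>c\<in>C. Y c x) - card C * \<mu>\<bar>} \<le> card C * (s - \<mu>\<^sup>2) / b\<^sup>2"
proof -
  define X where "X x = (\<Sum>c\<in>C. Y c x)" for x
  have X2: "(\<lambda>x. (X x)\<^sup>2) = (\<lambda>x. \<Sum>c\<in>C. \<Sum>c'\<in>C. Y c x * Y c' x)"
    by (simp add: X_def power2_eq_square sum_product)
  have int_X: "integrable M X"
    unfolding X_def using Y by auto
  have int_X2: "integrable M (\<lambda>x. (X x)\<^sup>2)"
    unfolding X2 using YY by auto
  have EX: "expectation X = card C * \<mu>"
    unfolding X_def using Y by simp
  have "expectation (\<lambda>x. (X x)\<^sup>2) = (\<Sum>c\<in>C. \<Sum>c'\<in>C. \<mu>\<^sup>2 + (if c = c' then s - \<mu>\<^sup>2 else 0))"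
    unfolding X2 using YY by (simp add: if_distrib[of "\<lambda>x. \<mu>\<^sup>2 + x"] cong: if_cong)
  also have "\<dots> = card C * (card C * \<mu>\<^sup>2 + (s - \<mu>\<^sup>2))"
    using C by (simp add: sum.distrib)
  finally have "variance X = card C * (s - \<mu>\<^sup>2)"
    using variance_eq[OF int_X int_X2] EX by (simp add: algebra_simps power2_eq_square)
  moreover have "random_variable borel X"
    using int_X by (rule borel_measurable_integrable)
  ultimately have "prob {x \<in> space M. b \<le> \<bar>X x - card C * \<mu>\<bar>} \<le> card C * (s - \<mu>\<^sup>2) / b\<^sup>2"
    using Chebyshev_inequality[OF _ int_X2 b] EX by simp
  then show ?thesis
    by (simp add: X_def)
qed

lemma prob_sum_block_products_deviation:
  fixes \<phi> :: "'a \<Rightarrow> real" and A :: "'c \<Rightarrow> 'b set"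
  assumes I: "finite I" and C: "finite C"
    and A_sub: "\<And>c. c \<in> C \<Longrightarrow> A c \<subseteq> I" and card_A: "\<And>c. c \<in> C \<Longrightarrow> card (A c) = r"
    and disj: "disjoint_family_on A C"
    and \<phi>: "integrable M \<phi>" and \<phi>2: "integrable M (\<lambda>x. (\<phi> x)\<^sup>2)"
    and b: "0 < b"
  shows "measure (PiM I (\<lambda>_. M))
           {\<omega> \<in> space (PiM I (\<lambda>_. M)). b \<le> \<bar>(\<Sum>c\<in>C. \<Prod>p\<in>A c. \<phi> (\<omega> p)) - card C * expectation \<phi> ^ r\<bar>}
         \<le> card C * (expectation (\<lambda>x. (\<phi> x)\<^sup>2) ^ r - expectation \<phi> ^ (2 * r)) / b\<^sup>2"
proof -
  interpret P: prob_space "PiM I (\<lambda>_. M)"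
    by (intro prob_space_PiM prob_space_axioms)
  define Y where "Y = (\<lambda>c \<omega>. \<Prod>p\<in>A c. \<phi> (\<omega> p))"
  have YY: "integrable (PiM I (\<lambda>_. M)) (\<lambda>\<omega>. Y c \<omega> * Y c' \<omega>) \<and>
    P.expectation (\<lambda>\<omega>. Y c \<omega> * Y c' \<omega>)
      = (if c = c' then expectation (\<lambda>x. (\<phi> x)\<^sup>2) ^ r else expectation \<phi> ^ (2 * r))"
    if "c \<in> C" "c' \<in> C" for c c'
  proof (cases "c = c'")
    case True
    have "Y c \<omega> * Y c' \<omega> = (\<Prod>p\<in>A c. (\<phi> (\<omega> p))\<^sup>2)" for \<omega>
      by (simp add: Y_def True power2_eq_square prod.distrib)
    then show ?thesis
      using integral_prod_coordinates[OF I A_sub[OF that(1)] \<phi>2] card_A[OF that(1)] True by simp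
  next
    case False
    have "A c \<inter> A c' = {}" "finite (A c)" "finite (A c')"
      using disj that False finite_subset[OF A_sub I] by (auto simp: disjoint_family_on_def)
    then have "Y c \<omega> * Y c' \<omega> = (\<Prod>p\<in>A c \<union> A c'. \<phi> (\<omega> p))" and "card (A c \<union> A c') = 2 * r" for \<omega>
      using card_A that by (simp_all add: Y_def prod.union_disjoint card_Un_disjoint)
    moreover have "A c \<union> A c' \<subseteq> I" using A_sub that by auto
    ultimately show ?thesis
      using integral_prod_coordinates[OF I _ \<phi>, of "A c \<union> A c'"] False by simp
  qed
  have "(expectation \<phi> ^ r)\<^sup>2 = expectation \<phi> ^ (2 * r)"
    by (simp add: power_mult[symmetric] mult.commute)
  then show ?thesis
    using P.prob_sum_uncorrelated_deviation[OF C _ _ _ _ b, of Y "expectation \<phi> ^ r"]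
      integral_prod_coordinates[OF I A_sub \<phi>] card_A YY
    by (simp add: Y_def)
qed

lemma prob_no_block_inside:
  fixes A :: "'c \<Rightarrow> 'b set"
  assumes I: "finite I" and C: "finite C" "C \<noteq> {}"
    and A_sub: "\<And>c. c \<in> C \<Longrightarrow> A c \<subseteq> I" and card_A: "\<And>c. c \<in> C \<Longrightarrow> card (A c) = r"
    and disj: "disjoint_family_on A C" and S: "S \<in> sets M" "0 < prob S"
  shows "measure (PiM I (\<lambda>_. M)) {\<omega> \<in> space (PiM I (\<lambda>_. M)). \<forall>c\<in>C. \<exists>p\<in>A c. \<omega> p \<notin> S}
           \<le> 1 / (card C * prob S ^ r)"
proof -
  interpret P: prob_space "PiM I (\<lambda>_. M)"
    by (intro prob_space_PiM prob_space_axioms)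
  define b where "b = card C * prob S ^ r"
  have b: "0 < b"
    using C S by (simp add: b_def card_gt_0_iff)
  have S_int: "integrable M (indicator S :: 'a \<Rightarrow> real)" "expectation (indicator S :: 'a \<Rightarrow> real) = prob S"
    using S by (simp_all add: sets.Int_space_eq2 less_top[symmetric])
  have ind_sq: "(\<lambda>x. (indicator S x :: real)\<^sup>2) = indicator S"
    by (auto simp: indicator_def)
  have "{\<omega> \<in> space (PiM I (\<lambda>_. M)). \<forall>c\<in>C. \<exists>p\<in>A c. \<omega> p \<notin> S}
      \<subseteq> {\<omega> \<in> space (PiM I (\<lambda>_. M)).
           b \<le> \<bar>(\<Sum>c\<in>C. \<Prod>p\<in>A c. indicator S (\<omega> p)) - card C * expectation (indicator S) ^ r\<bar>}"
  proof safe
    fix \<omega> assume "\<forall>c\<in>C. \<exists>p\<in>A c. \<omega> p \<notin> S"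
    \<comment> \<open>every block product vanishes, so the sum is 0 while its mean is \<open>b\<close>\<close>
    then have "(\<Sum>c\<in>C. \<Prod>p\<in>A c. indicator S (\<omega> p) :: real) = 0"
      using finite_subset[OF A_sub I] by (intro sum.neutral ballI prod_zero) (fastforce simp: indicator_def)+
    then show "b \<le> \<bar>(\<Sum>c\<in>C. \<Prod>p\<in>A c. indicator S (\<omega> p)) - card C * expectation (indicator S) ^ r\<bar>"
      using b S_int by (simp add: b_def)
  qed
  then have "measure (PiM I (\<lambda>_. M)) {\<omega> \<in> space (PiM I (\<lambda>_. M)). \<forall>c\<in>C. \<exists>p\<in>A c. \<omega> p \<notin> S}
      \<le> measure (PiM I (\<lambda>_. M)) {\<omega> \<in> space (PiM I (\<lambda>_. M)).
           b \<le> \<bar>(\<Sum>c\<in>C. \<Prod>p\<in>A c. indicator S (\<omega> p)) - card C * expectation (indicator S) ^ r\<bar>}"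
  proof (intro P.finite_measure_mono)
    have [measurable]: "(\<lambda>\<omega>. \<Sum>c\<in>C. \<Prod>p\<in>A c. indicator S (\<omega> p) :: real) \<in> borel_measurable (PiM I (\<lambda>_. M))"
      using integral_prod_coordinates(1)[OF I A_sub S_int(1)]
      by (intro borel_measurable_sum borel_measurable_integrable)
    show "{\<omega> \<in> space (PiM I (\<lambda>_. M)).
        b \<le> \<bar>(\<Sum>c\<in>C. \<Prod>p\<in>A c. indicator S (\<omega> p)) - card C * expectation (indicator S) ^ r\<bar>}
        \<in> sets (PiM I (\<lambda>_. M))"
      by measurable
  qed
  also have "\<dots> \<le> card C * (prob S ^ r - prob S ^ (2 * r)) / b\<^sup>2"
    using prob_sum_block_products_deviation[OF I C(1) A_sub card_A disj S_int(1) _ b] S_int ind_sq by simp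
  also have "\<dots> \<le> card C * prob S ^ r / b\<^sup>2"
    using S by (intro divide_right_mono mult_left_mono) auto
  also have "\<dots> = 1 / b"
    using b by (simp add: b_def power2_eq_square)
  finally show ?thesis
    by (simp add: b_def)
qed
end

section \<open>The Gaussian matrix\<close>

interpretation std_normal: prob_space std_normal_distribution
  using prob_space_normal_density by simp

lemma prob_space_gauss_space: "prob_space (gauss_space N)"
  unfolding gauss_space_def by (intro prob_space_PiM std_normal.prob_space_axioms)

lemma measurable_gauss_coordinate [measurable]:
  "(\<lambda>\<omega>. \<omega> p) \<in> borel_measurable (gauss_space N)"
proof (cases "p \<in> {..<N} \<times> {..<N}")
  case True
  then show ?thesis
    unfolding gauss_space_def by (auto intro: measurable_component_singleton cong: measurable_cong_sets)
next
  case False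
  then have "\<omega> p = undefined" if "\<omega> \<in> space (gauss_space N)" for \<omega>
    using that by (auto simp: gauss_space_def space_PiM intro: PiE_arb)
  then show ?thesis
    by (subst measurable_cong[where g = "\<lambda>_. undefined"]) auto
qed

lemma measurable_ipN_rows [measurable]:
  "(\<lambda>\<omega>. ipN N (curry \<omega> l) (curry \<omega> m)) \<in> borel_measurable (gauss_space N)"
  unfolding ipN_def curry_def
  by (intro borel_measurable_sum borel_measurable_times measurable_gauss_coordinate)

lemma measurable_gauss_curry [measurable]:
  "(\<lambda>\<omega>. curry \<omega> i j) \<in> borel_measurable (gauss_space N)"
  by simp

lemma std_normal_moments:
  "integrable std_normal_distribution (\<lambda>x::real. x)" "std_normal.expectation (\<lambda>x::real. x) = 0"
  "integrable std_normal_distribution (\<lambda>x::real. x\<^sup>2)" "std_normal.expectation (\<lambda>x::real. x\<^sup>2) = 1"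
  "integrable std_normal_distribution (\<lambda>x::real. (x\<^sup>2)\<^sup>2)" "std_normal.expectation (\<lambda>x::real. (x\<^sup>2)\<^sup>2) = 3"
  using integrable_std_normal_distribution_moment[of 1] integral_std_normal_distribution_moment_odd[of 1]
    std_normal_distribution_even_moments[of 1] std_normal_distribution_even_moments[of 2]
  by (simp_all add: fact_numeral flip: power_mult)

lemma prob_gram_entry_deviation:
  assumes l: "l < N" and m: "m < N" and b: "b > 0"
  shows "measure (gauss_space N) {\<omega> \<in> space (gauss_space N).
           b \<le> \<bar>ipN N (curry \<omega> l) (curry \<omega> m) - (if l = m then real N else 0)\<bar>} \<le> 2 * real N / b\<^sup>2"
proof (cases "l = m")
  case True
  have "measure (gauss_space N) {\<omega> \<in> space (gauss_space N).
      b \<le> \<bar>(\<Sum>c<N. \<Prod>p\<in>{(l, c)}. (\<omega> p)\<^sup>2) - real N\<bar>} \<le> real N * 2 / b\<^sup>2"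
    using std_normal.prob_sum_block_products_deviation[of "{..<N} \<times> {..<N}" "{..<N}" "\<lambda>c. {(l, c)}" 1
        "\<lambda>x. x\<^sup>2" b] l b std_normal_moments
    by (simp add: gauss_space_def disjoint_family_on_def subset_iff)
  moreover have "ipN N (curry \<omega> l) (curry \<omega> m) = (\<Sum>c<N. \<Prod>p\<in>{(l, c)}. (\<omega> p)\<^sup>2)" for \<omega>
    by (simp add: ipN_def True power2_eq_square)
  ultimately show ?thesis
    using True by (simp add: mult.commute[of "real N"])
next
  case False
  have "measure (gauss_space N) {\<omega> \<in> space (gauss_space N).
      b \<le> \<bar>(\<Sum>c<N. \<Prod>p\<in>{(l, c), (m, c)}. \<omega> p)\<bar>} \<le> real N / b\<^sup>2"
    using std_normal.prob_sum_block_products_deviation[of "{..<N} \<times> {..<N}" "{..<N}" "\<lambda>c. {(l, c), (m, c)}" 2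
        "\<lambda>x. x" b] l m b False std_normal_moments
    by (simp add: gauss_space_def disjoint_family_on_def subset_iff)
  also have "\<dots> \<le> 2 * real N / b\<^sup>2"
    by (simp add: divide_right_mono)
  moreover have "ipN N (curry \<omega> l) (curry \<omega> m) = (\<Sum>c<N. \<Prod>p\<in>{(l, c), (m, c)}. \<omega> p)" for \<omega>
    using False by (simp add: ipN_def)
  ultimately show ?thesis
    using False by simp
qed

lemma prob_not_gram_close:
  assumes kN: "k \<le> N" and N: "0 < N" and \<eta>: "0 < \<eta>"
  shows "measure (gauss_space N) {\<omega> \<in> space (gauss_space N). \<not> gram_close N k \<eta> (curry \<omega>)}
           \<le> 2 * (real k)\<^sup>2 / \<eta>\<^sup>2 / real N"
proof -
  interpret G: prob_space "gauss_space N" by (rule prob_space_gauss_space)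
  define E where "E = (\<lambda>(l, m). {\<omega> \<in> space (gauss_space N).
    \<eta> * real N \<le> \<bar>ipN N (curry \<omega> l) (curry \<omega> m) - (if l = m then real N else 0)\<bar>})"
  have E_sets: "E lm \<in> sets (gauss_space N)" for lm
  proof (cases lm)
    case (Pair l m)
    show ?thesis
      unfolding Pair E_def prod.case by measurable
  qed
  have "{\<omega> \<in> space (gauss_space N). \<not> gram_close N k \<eta> (curry \<omega>)} \<subseteq> (\<Union>lm\<in>{..<k} \<times> {..<k}. E lm)"
  proof
    fix \<omega> assume "\<omega> \<in> {\<omega> \<in> space (gauss_space N). \<not> gram_close N k \<eta> (curry \<omega>)}"
    then obtain l m where "l < k" "m < k" "\<omega> \<in> E (l, m)"
      by (auto simp: gram_close_def E_def not_le)
    then show "\<omega> \<in> (\<Union>lm\<in>{..<k} \<times> {..<k}. E lm)"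
      by blast
  qed
  then have "measure (gauss_space N) {\<omega> \<in> space (gauss_space N). \<not> gram_close N k \<eta> (curry \<omega>)}
      \<le> measure (gauss_space N) (\<Union>lm\<in>{..<k} \<times> {..<k}. E lm)"
    using E_sets by (intro G.finite_measure_mono) auto
  also have "\<dots> \<le> (\<Sum>lm\<in>{..<k} \<times> {..<k}. measure (gauss_space N) (E lm))"
    using E_sets by (intro G.finite_measure_subadditive_finite) auto
  also have "\<dots> \<le> (\<Sum>lm\<in>{..<k} \<times> {..<k}. 2 * real N / (\<eta> * real N)\<^sup>2)"
    using kN N \<eta> by (intro sum_mono) (auto simp: E_def intro!: prob_gram_entry_deviation)
  also have "\<dots> = 2 * (real k)\<^sup>2 / \<eta>\<^sup>2 / real N"
    using N \<eta> by (simp add: power2_eq_square field_simps)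
  finally show ?thesis .
qed

lemma std_normal_prob_interval_ge:
  assumes s: "0 < s" "s \<le> 1"
  shows "2 * std_normal_density 1 * s \<le> std_normal.prob {-s..s}"
proof -
  have "std_normal_density 1 \<le> std_normal_density x" if "\<bar>x\<bar> \<le> 1" for x
  proof -
    have "x\<^sup>2 \<le> 1\<^sup>2" using that abs_le_square_iff[of x 1] by simp
    then have "exp (- (1\<^sup>2 / 2)) \<le> exp (- (x\<^sup>2 / 2))" by simp
    then show ?thesis by (simp add: normal_density_def divide_right_mono)
  qed
  then have "(\<integral>x. std_normal_density 1 * indicator {-s..s} x \<partial>lborel)
      \<le> (\<integral>x. std_normal_density x * indicator {-s..s} x \<partial>lborel)"
    using s
    by (intro integral_mono integrable_mult_right integrable_real_indicator
        integrable_real_mult_indicator integrable_normal_density)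
       (auto simp: indicator_def)
  also have "\<dots> = std_normal.expectation (indicator {-s..s} :: real \<Rightarrow> real)"
    by (subst integral_density) (auto simp: normal_density_nonneg)
  finally show ?thesis
    using s by simp
qed

lemma prob_no_small_column:
  assumes s: "0 < s" "s \<le> 1" and kN: "k \<le> N" and N: "0 < N"
  shows "measure (gauss_space N) {\<omega> \<in> space (gauss_space N). \<forall>j<N. \<exists>i<k. s < \<bar>\<omega> (i, j)\<bar>}
           \<le> 1 / (real N * (2 * std_normal_density 1 * s) ^ k)"
proof -
  interpret G: prob_space "gauss_space N" by (rule prob_space_gauss_space)
  have p: "2 * std_normal_density 1 * s \<le> std_normal.prob {-s..s}"
    using s by (rule std_normal_prob_interval_ge)
  have d: "0 < 2 * std_normal_density 1 * s"
    using s normal_density_pos[of 1 0 1] by simp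
  have p0: "0 < std_normal.prob {-s..s}"
    using less_le_trans[OF d p] .
  have "{\<omega> \<in> space (gauss_space N). \<forall>j<N. \<exists>i<k. s < \<bar>\<omega> (i, j)\<bar>}
      \<subseteq> {\<omega> \<in> space (gauss_space N). \<forall>j\<in>{..<N}. \<exists>q\<in>{..<k} \<times> {j}. \<omega> q \<notin> {-s..s}}"
  proof safe
    fix \<omega> j
    assume "\<forall>j<N. \<exists>i<k. s < \<bar>\<omega> (i, j)\<bar>" and "j < N"
    then obtain i where "i < k" "s < \<bar>\<omega> (i, j)\<bar>"
      by blast
    then show "\<exists>q\<in>{..<k} \<times> {j}. \<omega> q \<notin> {-s..s}"
      by (intro bexI[of _ "(i, j)"]) auto
  qed
  then have "measure (gauss_space N) {\<omega> \<in> space (gauss_space N). \<forall>j<N. \<exists>i<k. s < \<bar>\<omega> (i, j)\<bar>}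
      \<le> measure (gauss_space N) {\<omega> \<in> space (gauss_space N). \<forall>j\<in>{..<N}. \<exists>q\<in>{..<k} \<times> {j}. \<omega> q \<notin> {-s..s}}"
    by (intro G.finite_measure_mono) measurable
  also have "\<dots> \<le> 1 / (real N * std_normal.prob {-s..s} ^ k)"
  proof -
    have "j \<in> {..<N} \<Longrightarrow> {..<k} \<times> {j} \<subseteq> {..<N} \<times> {..<N}" for j
      using kN by auto
    moreover have "disjoint_family_on (\<lambda>j. {..<k} \<times> {j}) {..<N}"
      by (auto simp: disjoint_family_on_def)
    moreover have "{..<N} \<noteq> {}"
      using N by auto
    ultimately show ?thesis
      using std_normal.prob_no_block_inside[of "{..<N} \<times> {..<N}" "{..<N}" "\<lambda>j. {..<k} \<times> {j}" k "{-s..s}"]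
      using p0 by (simp add: gauss_space_def card_cartesian_product)
  qed
  also have "\<dots> \<le> 1 / (real N * (2 * std_normal_density 1 * s) ^ k)"
    using N p d p0 s normal_density_pos[of 1 0 1]
    by (intro divide_left_mono mult_left_mono mult_pos_pos power_mono zero_less_power) auto
  finally show ?thesis .
qed

lemma prob_min_form_large:
  assumes a: "\<And>i. i < k \<Longrightarrow> 0 \<le> a i" and k: "0 < k" and kN: "k \<le> N"
    and \<sigma>: "0 < \<sigma>" "\<sigma> ^ k \<le> real N"
  shows "measure (gauss_space N) {\<omega> \<in> space (gauss_space N).
           (\<Sum>i<k. a i) * \<sigma>\<^sup>2 < real N powr (2 / real k) * min_form k a N (curry \<omega>)}
         \<le> 1 / (2 * std_normal_density 1 * \<sigma>) ^ k"
proof -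
  interpret G: prob_space "gauss_space N" by (rule prob_space_gauss_space)
  have N: "0 < N"
    using \<sigma> zero_less_power[of \<sigma> k] by linarith
  define \<nu> where "\<nu> = real N powr (1 / real k)"
  have \<nu>: "0 < \<nu>" "\<nu> ^ k = real N" "real N powr (2 / real k) = \<nu>\<^sup>2"
    using N k by (simp_all add: \<nu>_def powr_power[symmetric] powr_realpow[symmetric] powr_powr field_simps)
  define s where "s = \<sigma> / \<nu>"
  have "\<sigma> \<le> \<nu>"
    using power_mono_iff[of \<sigma> \<nu> k] \<sigma> \<nu> k by simp
  then have s: "0 < s" "s \<le> 1"
    using \<sigma> \<nu> by (auto simp: s_def)
  have "{\<omega> \<in> space (gauss_space N). (\<Sum>i<k. a i) * \<sigma>\<^sup>2 < real N powr (2 / real k) * min_form k a N (curry \<omega>)}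
      \<subseteq> {\<omega> \<in> space (gauss_space N). \<forall>j<N. \<exists>i<k. s < \<bar>\<omega> (i, j)\<bar>}"
  proof (safe, rule ccontr)
    fix \<omega> j
    assume large: "(\<Sum>i<k. a i) * \<sigma>\<^sup>2 < real N powr (2 / real k) * min_form k a N (curry \<omega>)"
      and j: "j < N" and small: "\<not> (\<exists>i<k. s < \<bar>\<omega> (i, j)\<bar>)"
    have "min_form k a N (curry \<omega>) \<le> (\<Sum>i<k. a i) * s\<^sup>2"
      using small by (intro min_form_le_small_column[OF a j]) auto
    then have "min_form k a N (curry \<omega>) \<le> (\<Sum>i<k. a i) * \<sigma>\<^sup>2 / \<nu>\<^sup>2"
      by (simp add: s_def power_divide)
    then show False
      using large \<nu> by (simp add: pos_le_divide_eq mult.commute)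
  qed
  then have "measure (gauss_space N) {\<omega> \<in> space (gauss_space N).
      (\<Sum>i<k. a i) * \<sigma>\<^sup>2 < real N powr (2 / real k) * min_form k a N (curry \<omega>)}
      \<le> measure (gauss_space N) {\<omega> \<in> space (gauss_space N). \<forall>j<N. \<exists>i<k. s < \<bar>\<omega> (i, j)\<bar>}"
    by (intro G.finite_measure_mono) measurable
  also have "\<dots> \<le> 1 / (real N * (2 * std_normal_density 1 * s) ^ k)"
    using s kN N by (rule prob_no_small_column)
  also have "real N * (2 * std_normal_density 1 * s) ^ k = (2 * std_normal_density 1 * \<sigma>) ^ k"
    using \<nu> N by (simp add: s_def power_mult_distrib power_divide)
  finally show ?thesis .
qed

lemma measurable_gs [measurable]:
  "(\<lambda>\<omega>. gs N (curry \<omega>) i t) \<in> borel_measurable (gauss_space N)"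
proof (induction i arbitrary: t rule: less_induct)
  case (less i)
  show ?case
    by (subst gs_eq)
       (auto simp: ipN_def intro!: borel_measurable_diff borel_measurable_sum borel_measurable_times
         borel_measurable_divide less.IH measurable_gauss_coordinate)
qed

lemma measurable_gs_min_diff: "gs_min_diff k a N \<in> borel_measurable (gauss_space N)"
  unfolding gs_min_diff_eq min_form_def
  by (intro borel_measurable_times borel_measurable_const borel_measurable_diff borel_measurable_Min
      borel_measurable_sum borel_measurable_power measurable_gs measurable_gauss_curry finite_lessThan)


section \<open>Convergence in probability\<close>

lemma prob_gs_min_diff_gt_le:
  assumes a: "\<And>i. i < k \<Longrightarrow> 0 < a i" and k: "0 < k" and kN: "k \<le> N"
    and \<eta>: "0 < \<eta>" "2 * (real k + 1)\<^sup>2 * \<eta> \<le> 1"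
    and \<sigma>: "0 < \<sigma>" "\<sigma> ^ k \<le> real N"
    and e: "gs_rel_error k a \<eta> * ((\<Sum>i<k. a i) * \<sigma>\<^sup>2) \<le> e"
  shows "measure (gauss_space N) {\<omega> \<in> space (gauss_space N). e < \<bar>gs_min_diff k a N \<omega>\<bar>}
           \<le> 2 * (real k)\<^sup>2 / \<eta>\<^sup>2 / real N + 1 / (2 * std_normal_density 1 * \<sigma>) ^ k"
proof -
  interpret G: prob_space "gauss_space N" by (rule prob_space_gauss_space)
  have N: "0 < N" using k kN by simp
  define T where "T = (\<Sum>i<k. a i) * \<sigma>\<^sup>2"
  define bad_gram where "bad_gram = {\<omega> \<in> space (gauss_space N). \<not> gram_close N k \<eta> (curry \<omega>)}"
  define large where "large = {\<omega> \<in> space (gauss_space N). T < real N powr (2 / real k) * min_form k a N (curry \<omega>)}"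
  have sets: "bad_gram \<in> sets (gauss_space N)" "large \<in> sets (gauss_space N)"
    unfolding bad_gram_def large_def gram_close_def min_form_def by measurable
  have "{\<omega> \<in> space (gauss_space N). e < \<bar>gs_min_diff k a N \<omega>\<bar>} \<subseteq> bad_gram \<union> large"
  proof (safe, rule ccontr)
    fix \<omega> assume \<omega>: "\<omega> \<in> space (gauss_space N)" and gt: "e < \<bar>gs_min_diff k a N \<omega>\<bar>"
      and "\<omega> \<notin> large" "\<omega> \<notin> bad_gram"
    then have G: "gram_close N k \<eta> (curry \<omega>)"
      and small: "real N powr (2 / real k) * min_form k a N (curry \<omega>) \<le> T"
      by (auto simp: bad_gram_def large_def)
    have "\<bar>gs_min_diff k a N \<omega>\<bar>
        = real N powr (2 / real k) * \<bar>min_form k a N (gs N (curry \<omega>)) - min_form k a N (curry \<omega>)\<bar>"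
      by (simp add: gs_min_diff_eq abs_mult)
    also have "\<dots> \<le> real N powr (2 / real k) * (gs_rel_error k a \<eta> * min_form k a N (curry \<omega>))"
      using gs_min_form_diff_le[OF G N less_imp_le[OF \<eta>(1)] \<eta>(2) a] by (intro mult_left_mono) auto
    also have "\<dots> \<le> gs_rel_error k a \<eta> * T"
      using small gs_rel_error_nonneg[OF a less_imp_le[OF \<eta>(1)]]
      by (simp add: mult.left_commute mult_left_mono)
    finally show False
      using gt e by (simp add: T_def)
  qed
  then have "measure (gauss_space N) {\<omega> \<in> space (gauss_space N). e < \<bar>gs_min_diff k a N \<omega>\<bar>}
      \<le> measure (gauss_space N) (bad_gram \<union> large)"
    using sets by (intro G.finite_measure_mono) auto
  also have "\<dots> \<le> measure (gauss_space N) bad_gram + measure (gauss_space N) large"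
    using sets by (intro measure_Un_le)
  also have "\<dots> \<le> 2 * (real k)\<^sup>2 / \<eta>\<^sup>2 / real N + 1 / (2 * std_normal_density 1 * \<sigma>) ^ k"
    unfolding bad_gram_def large_def T_def
    using prob_not_gram_close[OF kN N \<eta>(1)] prob_min_form_large[OF _ k kN \<sigma>] a
    by (intro add_mono) (auto intro: less_imp_le)
  finally show ?thesis .
qed

lemma eventually_prob_gs_min_diff_gt_le:
  assumes a: "\<And>i. i < k \<Longrightarrow> 0 < a i" and k: "0 < k" and e: "0 < e" and \<delta>: "0 < \<delta>"
  shows "\<exists>C. eventually (\<lambda>N. measure (gauss_space N)
           {\<omega> \<in> space (gauss_space N). e < \<bar>gs_min_diff k a N \<omega>\<bar>} \<le> C / real N + \<delta>) sequentially"
proof -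
  define c where "c = 2 * std_normal_density (1::real)"
  have c: "0 < c"
    by (simp add: c_def normal_density_pos)
  define \<sigma> where "\<sigma> = max 1 (1 / \<delta>) / c"
  have \<sigma>: "0 < \<sigma>"
    using c by (simp add: \<sigma>_def)
  have "max 1 (1 / \<delta>) \<le> max 1 (1 / \<delta>) ^ k"
    using power_increasing[of 1 k "max 1 (1 / \<delta>)"] k by simp
  moreover have "c * \<sigma> = max 1 (1 / \<delta>)"
    using c by (simp add: \<sigma>_def)
  ultimately have "1 / (c * \<sigma>) ^ k \<le> 1 / max 1 (1 / \<delta>)"
    by (intro divide_left_mono) auto
  also have "\<dots> \<le> 1 / (1 / \<delta>)"
    using \<delta> by (intro divide_left_mono) auto
  also have "\<dots> = \<delta>"
    by simp
  finally have tail: "1 / (c * \<sigma>) ^ k \<le> \<delta>" .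
  have "0 \<le> (\<Sum>i<k. a i) * \<sigma>\<^sup>2"
    using a by (intro mult_nonneg_nonneg sum_nonneg) (auto intro: less_imp_le)
  with exists_gs_rel_error_le[of k a "(\<Sum>i<k. a i) * \<sigma>\<^sup>2" e] a e
  obtain \<eta> where \<eta>: "0 < \<eta>" "2 * (real k + 1)\<^sup>2 * \<eta> \<le> 1"
    and err: "gs_rel_error k a \<eta> * ((\<Sum>i<k. a i) * \<sigma>\<^sup>2) \<le> e"
    by auto
  have "eventually (\<lambda>N. k \<le> N \<and> \<sigma> ^ k \<le> real N) sequentially"
    using eventually_ge_at_top[of k] eventually_ge_at_top[of "nat \<lceil>\<sigma> ^ k\<rceil>"]
    by eventually_elim linarith
  then have "eventually (\<lambda>N. measure (gauss_space N)
      {\<omega> \<in> space (gauss_space N). e < \<bar>gs_min_diff k a N \<omega>\<bar>} \<le> 2 * (real k)\<^sup>2 / \<eta>\<^sup>2 / real N + \<delta>) sequentially"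
  proof eventually_elim
    case (elim N)
    then show ?case
      using prob_gs_min_diff_gt_le[OF a k _ \<eta> \<sigma> _ err, of N] tail by (simp add: c_def)
  qed
  then show ?thesis ..
qed

lemma tendsto_zero_if_eventually_le_add:
  fixes f :: "'a \<Rightarrow> real"
  assumes nonneg: "\<And>x. 0 \<le> f x"
    and approx: "\<And>\<delta>. 0 < \<delta> \<Longrightarrow> \<exists>g. (g \<longlongrightarrow> 0) F \<and> eventually (\<lambda>x. f x \<le> g x + \<delta>) F"
  shows "(f \<longlongrightarrow> 0) F"
proof (rule order_tendstoI)
  fix r :: real
  assume "r < 0"
  then show "eventually (\<lambda>x. r < f x) F"
    using nonneg by (auto intro: always_eventually less_le_trans)
next
  fix r :: real
  assume r: "0 < r"
  then obtain g where g: "(g \<longlongrightarrow> 0) F" and le: "eventually (\<lambda>x. f x \<le> g x + r / 2) F"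
    using approx[of "r / 2"] by auto
  have "eventually (\<lambda>x. g x < r / 2) F"
    using order_tendstoD(2)[OF g, of "r / 2"] r by simp
  with le show "eventually (\<lambda>x. f x < r) F"
    by eventually_elim simp
qed

theorem lemma3p11:
  fixes k :: nat and a :: "nat \<Rightarrow> real"
  assumes "\<And>i. i < k \<Longrightarrow> a i > 0"
  shows "(\<forall>N. gs_min_diff k a N \<in> borel_measurable (gauss_space N))
       \<and> (\<forall>\<epsilon>>0. ((\<lambda>N. measure (gauss_space N)
                  {\<omega> \<in> space (gauss_space N). \<bar>gs_min_diff k a N \<omega>\<bar> > \<epsilon>}) \<longlongrightarrow> 0) sequentially)"
proof (intro conjI allI impI)
  show "gs_min_diff k a N \<in> borel_measurable (gauss_space N)" for N
    by (rule measurable_gs_min_diff)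
next
  fix e :: real
  assume e: "e > 0"
  show "((\<lambda>N. measure (gauss_space N)
      {\<omega> \<in> space (gauss_space N). \<bar>gs_min_diff k a N \<omega>\<bar> > e}) \<longlongrightarrow> 0) sequentially"
  proof (cases "k = 0")
    case True
    then show ?thesis
      using e by (simp add: gs_min_diff_def)
  next
    case False
    show ?thesis
    proof (rule tendsto_zero_if_eventually_le_add)
      fix \<delta> :: real
      assume "0 < \<delta>"
      then obtain C where "eventually (\<lambda>N. measure (gauss_space N)
          {\<omega> \<in> space (gauss_space N). e < \<bar>gs_min_diff k a N \<omega>\<bar>} \<le> C / real N + \<delta>) sequentially"
        using eventually_prob_gs_min_diff_gt_le[of k a e \<delta>] assms False e by auto
      then show "\<exists>g. (g \<longlongrightarrow> 0) sequentially \<and> eventually (\<lambda>N. measure (gauss_space N)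
          {\<omega> \<in> space (gauss_space N). e < \<bar>gs_min_diff k a N \<omega>\<bar>} \<le> g N + \<delta>) sequentially"
        using lim_const_over_n[of C] by blast
    qed simp
  qed
qed

end
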